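(* Let $c_2,c_3,a_0,a_1,a_2,b_0,b_1$ be constants, $\mu(t)=t^2+c_2t+c_3$, $\phi=a_0\mu(t)^2+a_1\mu(t)+a_2$, $\psi=b_0\mu(t)+b_1$, $\lambda_n=n((n-1)a_0+b_0)$, and $\operatorname{L}_n=\phi\,\mathbb{D}^2+\psi\,\mathbb{S}\mathbb{D}-\lambda_n I$. Assume that for each $n\ge0$ there is a unique monic polynomial $P_n$ of degree $n$ in $\mu(t)$ with $\operatorname{L}_n(P_n)=0$ (i.e. $\phi\,\mathbb{D}^2P_n+\psi\,\mathbb{S}\mathbb{D}P_n=\lambda_nP_n$), and write $P_n=\vartheta_n+p_{1,n}\vartheta_{n-1}+p_{2,n}\vartheta_{n-2}+\cdots$. Then there exist sequences $\{\beta_n\}$ and $\{\gamma_n\}$ such that $$P_{n+1}=(\mu(t)-\beta_n)P_n-\gamma_nP_{n-1},$$ where $$\beta_n=p_{1,n}+f_n+\frac{k_{1,n+1}}{\lambda_n-\lambda_{n+1}},\qquad \gamma_n=\frac{t_n}{\lambda_{n-1}-\lambda_{n+1}},$$ $$t_n=k_{2,n+1}+(f_n+p_{1,n}-\beta_n)k_{1,n}+(p_{1,n}f_{n-1}+p_{2,n}-\beta_np_{1,n})(\lambda_{n-1}-\lambda_{n+1}).$$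
   Context: Operators: $\mathbb{D}f(t)=\frac{f(t+1/2)-f(t-1/2)}{\mu(t+1/2)-\mu(t-1/2)}$, $\mathbb{S}f(t)=\frac{f(t+1/2)+f(t-1/2)}{2}$, acting on polynomials in $\mu(t)$. Basis: $\vartheta_n(t)=(-4)^{-n}(2t+1/2+c_2)_n(-2t+1/2-c_2)_n$ (Pochhammer symbols), $\vartheta_k=0$ for $k<0$, monic of degree $n$ in $\mu(t)$, with $\mu(t)\vartheta_n=\vartheta_{n+1}+f_n\vartheta_n$ and $\mathbb{S}\vartheta_n=\vartheta_n+g_n\vartheta_{n-1}$, where $f_n=-\frac{c_2^2}{4}+\frac{(2n+1)^2}{16}+c_3$, $g_n=\frac{n(2n-1)}4$. Constants: $k_{1,j}=a_0j(j-1)(f_{j-1}+f_{j-2})+b_0jf_{j-1}+a_1j(j-1)+b_0jg_{j-1}+b_1j$, $k_{2,j}=a_0j(j-1)f_{j-2}^2+a_1j(j-1)f_{j-2}+b_0jg_{j-1}f_{j-2}+a_2j(j-1)+b_1jg_{j-1}$. *)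

theory Defs
  imports Complex_Main "HOL-Computational_Algebra.Polynomial"
begin

definition mu :: "real \<Rightarrow> real \<Rightarrow> real \<Rightarrow> real" where
  "mu c2 c3 t = t^2 + c2 * t + c3"

definition Dop :: "real \<Rightarrow> real \<Rightarrow> (real \<Rightarrow> real) \<Rightarrow> real \<Rightarrow> real" where
  "Dop c2 c3 f t = (f (t + 1/2) - f (t - 1/2)) / (mu c2 c3 (t + 1/2) - mu c2 c3 (t - 1/2))"

definition Sop :: "(real \<Rightarrow> real) \<Rightarrow> real \<Rightarrow> real" where
  "Sop f t = (f (t + 1/2) + f (t - 1/2)) / 2"

definition theta :: "real \<Rightarrow> nat \<Rightarrow> real \<Rightarrow> real" where
  "theta c2 n t = inverse ((-4) ^ n) * pochhammer (2*t + 1/2 + c2) n * pochhammer (-2*t + 1/2 - c2) n"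

definition fseq :: "real \<Rightarrow> real \<Rightarrow> int \<Rightarrow> real" where
  "fseq c2 c3 n = - (c2^2 / 4) + (2 * of_int n + 1)^2 / 16 + c3"

definition gseq :: "int \<Rightarrow> real" where
  "gseq n = of_int n * (2 * of_int n - 1) / 4"

definition lam :: "real \<Rightarrow> real \<Rightarrow> int \<Rightarrow> real" where
  "lam a0 b0 n = of_int n * ((of_int n - 1) * a0 + b0)"

definition k1 :: "real \<Rightarrow> real \<Rightarrow> real \<Rightarrow> real \<Rightarrow> real \<Rightarrow> real \<Rightarrow> int \<Rightarrow> real" where
  "k1 c2 c3 a0 a1 b0 b1 j =
     a0 * of_int j * (of_int j - 1) * (fseq c2 c3 (j - 1) + fseq c2 c3 (j - 2))
     + b0 * of_int j * fseq c2 c3 (j - 1) + a1 * of_int j * (of_int j - 1)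
     + b0 * of_int j * gseq (j - 1) + b1 * of_int j"

definition k2 :: "real \<Rightarrow> real \<Rightarrow> real \<Rightarrow> real \<Rightarrow> real \<Rightarrow> real \<Rightarrow> real \<Rightarrow> int \<Rightarrow> real" where
  "k2 c2 c3 a0 a1 a2 b0 b1 j =
     a0 * of_int j * (of_int j - 1) * (fseq c2 c3 (j - 2))^2
     + a1 * of_int j * (of_int j - 1) * fseq c2 c3 (j - 2)
     + b0 * of_int j * gseq (j - 1) * fseq c2 c3 (j - 2)
     + a2 * of_int j * (of_int j - 1) + b1 * of_int j * gseq (j - 1)"

text \<open>The identity is required at every t where all denominators occurring in D^2 and S D
  are nonzero (2t + c2 not in {-1,0,1}); for polynomials this is the polynomial identity.\<close>
definition L_zero :: "real \<Rightarrow> real \<Rightarrow> real \<Rightarrow> real \<Rightarrow> real \<Rightarrow> real \<Rightarrow> real \<Rightarrow> nat \<Rightarrow> real poly \<Rightarrow> bool" where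
  "L_zero c2 c3 a0 a1 a2 b0 b1 n q \<longleftrightarrow>
     (\<forall>t. 2*t + c2 \<notin> {-1, 0, 1} \<longrightarrow>
        (let F = (\<lambda>s. poly q (mu c2 c3 s));
             m = mu c2 c3 t
         in (a0 * m^2 + a1 * m + a2) * Dop c2 c3 (Dop c2 c3 F) t
            + (b0 * m + b1) * Sop (Dop c2 c3 F) t
            = lam a0 b0 (int n) * F t))"

end

theory Submission
  imports Defs
begin

text \<open>
  In the basis \<theta>_j, the operator L acts by L \<theta>_j = \<lambda>_j \<theta>_j + k_{1,j} \<theta>_{j-1} + k_{2,j} \<theta>_{j-2}
  and multiplication by \<mu> acts by \<mu> \<theta>_j = \<theta>_{j+1} + f_j \<theta>_j. On coefficient sequences these two
  operators satisfy a relation of Askey-Wilson type. On an eigenvector c of eigenvalue \<lambda>_n it says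
  that (L - \<lambda>_{n+1}) (L - \<lambda>_{n-1}) annihilates \<mu> c - \<alpha> c for a suitable scalar \<alpha>.
  Uniqueness of the P_n forces the \<lambda>_n to be pairwise distinct, and then every eigenvector of
  eigenvalue \<lambda>_m supported on the first n + 2 coordinates is a multiple of the coefficient sequence
  of P_m. Hence \<mu> P_n is a combination of P_{n+1}, P_n and P_{n-1}, and comparing the two top
  coefficients, together with the eigen-equation for P_{n+1}, yields \<beta>_n and \<gamma>_n.
\<close>

definition supported_upto :: "(int \<Rightarrow> 'a::zero) \<Rightarrow> int \<Rightarrow> bool" where
  "supported_upto c N \<longleftrightarrow> (\<forall>j. j < 0 \<or> N < j \<longrightarrow> c j = 0)"

lemma sum_eq_if_same_support:
  fixes g :: "'b \<Rightarrow> 'a::comm_monoid_add"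
  assumes "finite A" "finite B" "\<And>j. g j \<noteq> 0 \<Longrightarrow> j \<in> A \<and> j \<in> B"
  shows "sum g A = sum g B"
proof -
  have "sum g A = sum g (A \<inter> B)"
    by (rule sum.mono_neutral_right) (use assms in auto)
  also have "\<dots> = sum g B"
    by (rule sum.mono_neutral_left) (use assms in auto)
  finally show ?thesis .
qed

lemma sum_atLeastAtMost_shift:
  fixes g :: "int \<Rightarrow> 'a::comm_monoid_add"
  assumes "\<And>i. g i \<noteq> 0 \<Longrightarrow> a \<le> i \<and> i \<le> b \<and> a \<le> i + k \<and> i + k \<le> b"
  shows "(\<Sum>j\<in>{a..b}. g (j - k)) = (\<Sum>j\<in>{a..b}. g j)"
proof -
  have "(\<Sum>j\<in>{a..b}. g (j - k)) = (\<Sum>i\<in>(\<lambda>j. j - k) ` {a..b}. g i)"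
    by (subst sum.reindex) (auto simp: inj_on_def)
  also have "(\<lambda>j. j - k) ` {a..b} = {a-k..b-k}"
    by (auto simp: image_iff intro!: bexI[where x="_ + k"])
  also have "(\<Sum>i\<in>{a-k..b-k}. g i) = (\<Sum>j\<in>{a..b}. g j)"
    by (rule sum_eq_if_same_support) (use assms in force)+
  finally show ?thesis .
qed

lemma sum_supported_upto_extend:
  fixes g :: "int \<Rightarrow> 'a::semiring_0"
  assumes "supported_upto c N" "N \<le> M"
  shows "(\<Sum>j\<in>{0..N}. c j * g j) = (\<Sum>j\<in>{0..M}. c j * g j)"
proof (rule sum_eq_if_same_support)
  fix j
  assume "c j * g j \<noteq> 0"
  then have "c j \<noteq> 0"
    by auto
  then show "j \<in> {0..N} \<and> j \<in> {0..M}"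
    using assms unfolding supported_upto_def by force
qed auto

section \<open>Divided differences of the basis \<open>\<theta>\<close>\<close>

definition central_prod :: "nat \<Rightarrow> real \<Rightarrow> real" where
  "central_prod n v = (\<Prod>i<n. v\<^sup>2 - (real i + 1/2)\<^sup>2)"

lemma central_prod_0 [simp]: "central_prod 0 v = 1"
  by (simp add: central_prod_def)

lemma central_prod_Suc: "central_prod (Suc n) v = central_prod n v * (v\<^sup>2 - (real n + 1/2)\<^sup>2)"
  by (simp add: central_prod_def)

lemma central_prod_Suc_shift_up:
  "central_prod (Suc n) (v + 1) = central_prod n v * (v + real n + 1/2) * (v + real n + 3/2)"
proof (induction n)
  case (Suc n)
  then show ?case
    by (simp only: central_prod_Suc[of "Suc n"] central_prod_Suc[of n v])
      (simp add: power2_eq_square field_simps)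
qed (simp add: central_prod_Suc power2_eq_square field_simps)

lemma central_prod_Suc_shift_down:
  "central_prod (Suc n) (v - 1) = central_prod n v * (v - real n - 1/2) * (v - real n - 3/2)"
proof (induction n)
  case (Suc n)
  then show ?case
    by (simp only: central_prod_Suc[of "Suc n"] central_prod_Suc[of n v])
      (simp add: power2_eq_square field_simps)
qed (simp add: central_prod_Suc power2_eq_square field_simps)

lemma central_prod_Suc_diff:
  "central_prod (Suc n) (v + 1) - central_prod (Suc n) (v - 1) = 4 * real (Suc n) * v * central_prod n v"
  unfolding central_prod_Suc_shift_up central_prod_Suc_shift_down by (simp add: field_simps)

lemma central_prod_Suc_sum:
  "central_prod (Suc n) (v + 1) + central_prod (Suc n) (v - 1)
     = 2 * central_prod (Suc n) v + 2 * real (Suc n) * (2 * real (Suc n) - 1) * central_prod n v"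
  unfolding central_prod_Suc_shift_up central_prod_Suc_shift_down central_prod_Suc[of n v]
  by (simp add: power2_eq_square field_simps)

locale AW_operator =
  fixes c2 c3 a0 a1 a2 b0 b1 :: real
begin

abbreviation "\<mu> \<equiv> mu c2 c3"
abbreviation "\<theta> \<equiv> theta c2"
abbreviation "D \<equiv> Dop c2 c3"
abbreviation "f \<equiv> fseq c2 c3"
abbreviation "\<Lambda> \<equiv> lam a0 b0"
abbreviation "\<kappa>\<^sub>1 \<equiv> k1 c2 c3 a0 a1 b0 b1"
abbreviation "\<kappa>\<^sub>2 \<equiv> k2 c2 c3 a0 a1 a2 b0 b1"

lemma theta_eq_central_prod: "\<theta> n t = central_prod n (2*t + c2) / 4^n"
proof (induction n)
  case (Suc n)
  have "\<theta> (Suc n) t = \<theta> n t * ((2*t + 1/2 + c2 + real n) * (-2*t + 1/2 - c2 + real n)) / (-4)"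
    by (simp add: theta_def pochhammer_Suc field_simps)
  also have "\<dots> = central_prod n (2*t + c2) / 4^n * (((2*t + c2)\<^sup>2 - (real n + 1/2)\<^sup>2) / 4)"
    by (simp add: Suc power2_eq_square field_simps)
  finally show ?case by (simp add: central_prod_Suc field_simps)
qed (simp add: theta_def)

lemma theta_0 [simp]: "\<theta> 0 t = 1"
  by (simp add: theta_def)

lemma theta_Suc: "\<theta> (Suc n) t = \<theta> n t * (\<mu> t - f (int n))"
  by (simp add: theta_eq_central_prod central_prod_Suc mu_def fseq_def power2_eq_square field_simps)

lemma mu_mult_theta: "\<mu> t * \<theta> n t = \<theta> (Suc n) t + f (int n) * \<theta> n t"
  by (simp add: theta_Suc algebra_simps)

lemma Dop_theta:
  assumes "2*t + c2 \<noteq> 0"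
  shows "D (\<theta> n) t = real n * \<theta> (n - 1) t"
proof (cases n)
  case (Suc m)
  define v where "v = 2*t + c2"
  have mu_diff: "\<mu> (t + 1/2) - \<mu> (t - 1/2) = v"
    by (simp add: v_def mu_def power2_eq_square algebra_simps)
  have shift: "2*(t + 1/2) + c2 = v + 1" "2*(t - 1/2) + c2 = v - 1"
    by (simp_all add: v_def)
  have "D (\<theta> n) t = (central_prod (Suc m) (v + 1) / 4^Suc m - central_prod (Suc m) (v - 1) / 4^Suc m) / v"
    unfolding Dop_def mu_diff theta_eq_central_prod shift Suc ..
  also have "\<dots> = 4 * real (Suc m) * v * central_prod m v / 4^Suc m / v"
    unfolding diff_divide_distrib[symmetric] central_prod_Suc_diff ..
  also have "\<dots> = real n * \<theta> (n - 1) t"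
    using assms unfolding Suc theta_eq_central_prod v_def[symmetric] by (simp add: field_simps)
  finally show ?thesis .
qed (simp add: Dop_def)

lemma Sop_theta: "Sop (\<theta> n) t = \<theta> n t + gseq (int n) * \<theta> (n - 1) t"
proof (cases n)
  case (Suc m)
  define v where "v = 2*t + c2"
  have shift: "2*(t + 1/2) + c2 = v + 1" "2*(t - 1/2) + c2 = v - 1"
    by (simp_all add: v_def)
  have "Sop (\<theta> n) t = (central_prod (Suc m) (v + 1) / 4^Suc m + central_prod (Suc m) (v - 1) / 4^Suc m) / 2"
    unfolding Sop_def theta_eq_central_prod shift Suc ..
  also have "\<dots> = \<theta> n t + gseq (int n) * \<theta> (n - 1) t"
    unfolding add_divide_distrib[symmetric] central_prod_Suc_sum Suc theta_eq_central_prod v_def[symmetric]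
    by (simp add: gseq_def field_simps)
  finally show ?thesis .
qed (simp add: Sop_def gseq_def)

definition Lop :: "(real \<Rightarrow> real) \<Rightarrow> real \<Rightarrow> real" where
  "Lop F t = (a0 * (\<mu> t)\<^sup>2 + a1 * \<mu> t + a2) * D (D F) t + (b0 * \<mu> t + b1) * Sop (D F) t"

lemma L_zero_iff_Lop:
  "L_zero c2 c3 a0 a1 a2 b0 b1 n q \<longleftrightarrow>
     (\<forall>t. 2*t + c2 \<notin> {-1, 0, 1} \<longrightarrow> Lop (\<lambda>s. poly q (\<mu> s)) t = \<Lambda> (int n) * poly q (\<mu> t))"
  unfolding L_zero_def Lop_def Let_def ..

lemma Lop_sum: "Lop (\<lambda>s. \<Sum>j\<in>A. c j * G j s) t = (\<Sum>j\<in>A. c j * Lop (G j) t)"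
proof -
  have "D (\<lambda>s. \<Sum>j\<in>A. c j * G j s) = (\<lambda>s. \<Sum>j\<in>A. c j * D (G j) s)" for G :: "'a \<Rightarrow> real \<Rightarrow> real"
    by (rule ext) (simp add: Dop_def sum_subtractf[symmetric] sum_divide_distrib right_diff_distrib)
  moreover have "Sop (\<lambda>s. \<Sum>j\<in>A. c j * G j s) = (\<lambda>s. \<Sum>j\<in>A. c j * Sop (G j) s)" for G :: "'a \<Rightarrow> real \<Rightarrow> real"
    by (rule ext) (simp add: Sop_def sum.distrib[symmetric] sum_divide_distrib distrib_left)
  ultimately show ?thesis
    by (simp add: Lop_def sum.distrib[symmetric] sum_distrib_left algebra_simps)
qed

lemma Lop_add: "Lop (\<lambda>s. F s + G s) t = Lop F t + Lop G t"
  by (simp add: Lop_def Dop_def Sop_def add_divide_distrib[symmetric] algebra_simps)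

lemma Dop_cong: "F (t + 1/2) = G (t + 1/2) \<Longrightarrow> F (t - 1/2) = G (t - 1/2) \<Longrightarrow> D F t = D G t"
  by (simp add: Dop_def)

lemma Sop_cong: "F (t + 1/2) = G (t + 1/2) \<Longrightarrow> F (t - 1/2) = G (t - 1/2) \<Longrightarrow> Sop F t = Sop G t"
  by (simp add: Sop_def)

lemma Dop_Dop_theta:
  assumes "2*t + c2 \<notin> {-1, 0, 1}"
  shows "D (D (\<theta> j)) t = real j * real (j - 1) * \<theta> (j - 2) t"
proof -
  have "D (D (\<theta> j)) t = D (\<lambda>s. real j * \<theta> (j - 1) s) t"
    using assms by (intro Dop_cong) (simp_all add: Dop_theta)
  also have "\<dots> = real j * D (\<theta> (j - 1)) t"
    by (simp add: Dop_def right_diff_distrib)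
  also have "\<dots> = real j * real (j - 1) * \<theta> (j - 2) t"
    using assms by (simp add: Dop_theta numeral_2_eq_2)
  finally show ?thesis .
qed

lemma Sop_Dop_theta:
  assumes "2*t + c2 \<notin> {-1, 0, 1}"
  shows "Sop (D (\<theta> j)) t = real j * (\<theta> (j - 1) t + gseq (int j - 1) * \<theta> (j - 2) t)"
proof -
  have "Sop (D (\<theta> j)) t = Sop (\<lambda>s. real j * \<theta> (j - 1) s) t"
    using assms by (intro Sop_cong) (simp_all add: Dop_theta)
  also have "\<dots> = real j * Sop (\<theta> (j - 1)) t"
    by (simp add: Sop_def distrib_left)
  also have "\<dots> = real j * (\<theta> (j - 1) t + gseq (int j - 1) * \<theta> (j - 2) t)"
    by (cases j) (simp_all add: Sop_theta numeral_2_eq_2)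
  finally show ?thesis .
qed

lemma Lop_theta:
  assumes "2*t + c2 \<notin> {-1, 0, 1}"
  shows "Lop (\<theta> j) t = \<Lambda> (int j) * \<theta> j t + \<kappa>\<^sub>1 (int j) * \<theta> (j - 1) t + \<kappa>\<^sub>2 (int j) * \<theta> (j - 2) t"
proof -
  have Lop_theta_expanded: "Lop (\<theta> j) t = (a0 * (\<mu> t)\<^sup>2 + a1 * \<mu> t + a2) * (real j * real (j - 1) * \<theta> (j - 2) t)
      + (b0 * \<mu> t + b1) * (real j * (\<theta> (j - 1) t + gseq (int j - 1) * \<theta> (j - 2) t))"
    unfolding Lop_def Dop_Dop_theta[OF assms] Sop_Dop_theta[OF assms] ..
  consider "j = 0" | "j = 1" | r where "j = Suc (Suc r)"
    by (metis One_nat_def not0_implies_Suc)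
  then show ?thesis
  proof cases
    case 1
    then show ?thesis unfolding Lop_theta_expanded by (simp add: lam_def k1_def k2_def)
  next
    case 2
    then show ?thesis unfolding Lop_theta_expanded
      by (simp add: lam_def k1_def k2_def gseq_def theta_Suc[of 0] algebra_simps)
  next
    case 3
    define M where "M = \<mu> t"
    have e1: "M * \<theta> r t = \<theta> (Suc r) t + f (int r) * \<theta> r t"
      unfolding M_def by (rule mu_mult_theta)
    have e2: "M * \<theta> (Suc r) t = \<theta> j t + f (int r + 1) * \<theta> (Suc r) t"
      unfolding M_def 3 using mu_mult_theta[of t "Suc r"] by (simp add: add.commute)
    have e3: "M\<^sup>2 * \<theta> r t = \<theta> j t + (f (int r + 1) + f (int r)) * \<theta> (Suc r) t + (f (int r))\<^sup>2 * \<theta> r t"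
      using e1 e2 unfolding power2_eq_square by algebra
    have "Lop (\<theta> j) t = (a0 * (M\<^sup>2 * \<theta> r t) + a1 * (M * \<theta> r t) + a2 * \<theta> r t) * (real j * real (j - 1))
        + (b0 * (M * \<theta> (Suc r) t) + b1 * \<theta> (Suc r) t + gseq (int j - 1) * (b0 * (M * \<theta> r t) + b1 * \<theta> r t)) * real j"
      unfolding Lop_theta_expanded by (simp add: 3 M_def algebra_simps)
    also have "\<dots> = \<Lambda> (int j) * \<theta> j t + \<kappa>\<^sub>1 (int j) * \<theta> (Suc r) t + \<kappa>\<^sub>2 (int j) * \<theta> r t"
      unfolding e1 e2 e3 by (simp add: 3 lam_def k1_def k2_def algebra_simps)
    finally show ?thesis by (simp add: 3)
  qed
qed

lemma k1_0 [simp]: "\<kappa>\<^sub>1 0 = 0"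
  by (simp add: k1_def)

lemma k2_0 [simp]: "\<kappa>\<^sub>2 0 = 0"
  by (simp add: k2_def)

lemma k2_1 [simp]: "\<kappa>\<^sub>2 1 = 0"
  by (simp add: k2_def gseq_def)

definition theta_int :: "int \<Rightarrow> real \<Rightarrow> real" where
  "theta_int j t = (if j < 0 then 0 else \<theta> (nat j) t)"

lemma Lop_theta_int:
  assumes "2*t + c2 \<notin> {-1, 0, 1}"
  shows "Lop (theta_int j) t = \<Lambda> j * theta_int j t + \<kappa>\<^sub>1 j * theta_int (j - 1) t + \<kappa>\<^sub>2 j * theta_int (j - 2) t"
proof (cases "j < 0")
  case True
  then have "theta_int j = (\<lambda>_. 0)"
    by (simp add: theta_int_def fun_eq_iff)
  with True show ?thesis
    by (simp add: Lop_def Dop_def Sop_def theta_int_def)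
next
  case False
  then obtain n where j: "j = int n"
    by (metis nonneg_int_cases not_less)
  have k1_eq: "\<kappa>\<^sub>1 (int n) * \<theta> (n - 1) t = \<kappa>\<^sub>1 (int n) * theta_int (int n - 1) t"
    by (cases n) (simp_all add: theta_int_def)
  have k2_eq: "\<kappa>\<^sub>2 (int n) * \<theta> (n - 2) t = \<kappa>\<^sub>2 (int n) * theta_int (int n - 2) t"
  proof (cases "n < 2")
    case True
    then have "n = 0 \<or> n = 1"
      by auto
    then show ?thesis
      by auto
  next
    case False
    then have "nat (int n - 2) = n - 2"
      by auto
    with False show ?thesis
      by (simp add: theta_int_def)
  qed
  have "theta_int (int n) = \<theta> n"
    by (simp add: theta_int_def fun_eq_iff)
  then show ?thesis
    using Lop_theta[OF assms, where j=n] unfolding j k1_eq k2_eq by simp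
qed

lemma mu_mult_theta_int: "0 \<le> j \<Longrightarrow> \<mu> t * theta_int j t = theta_int (j + 1) t + f j * theta_int j t"
  using mu_mult_theta[where t=t and n="nat j"] by (simp add: theta_int_def Suc_nat_eq_nat_zadd1 add.commute)

section \<open>The operator in \<open>\<theta>\<close>-coordinates\<close>

definition L_coeffs :: "(int \<Rightarrow> real) \<Rightarrow> int \<Rightarrow> real" where
  "L_coeffs c i = \<Lambda> i * c i + \<kappa>\<^sub>1 (i + 1) * c (i + 1) + \<kappa>\<^sub>2 (i + 2) * c (i + 2)"

definition mu_coeffs :: "(int \<Rightarrow> real) \<Rightarrow> int \<Rightarrow> real" where
  "mu_coeffs c i = c (i - 1) + f i * c i"

lemma L_coeffs_supported:
  assumes "supported_upto c N"
  shows "supported_upto (L_coeffs c) N"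
  unfolding supported_upto_def
proof (intro allI impI)
  fix j :: int
  assume "j < 0 \<or> N < j"
  then consider "N < j \<or> j < -2" | "j = -1" | "j = -2"
    by linarith
  then show "L_coeffs c j = 0"
    by cases (use assms in \<open>auto simp: supported_upto_def L_coeffs_def\<close>)
qed

lemma mu_coeffs_supported: "supported_upto c N \<Longrightarrow> supported_upto (mu_coeffs c) (N + 1)"
  unfolding supported_upto_def mu_coeffs_def by auto

lemma Lop_theta_sum:
  assumes t: "2*t + c2 \<notin> {-1, 0, 1}" and c: "supported_upto c N"
  shows "Lop (\<lambda>s. \<Sum>j\<in>{0..N}. c j * theta_int j s) t = (\<Sum>j\<in>{0..N}. L_coeffs c j * theta_int j t)"
proof -
  have shift: "(\<Sum>j\<in>{0..N}. c j * \<kappa> j * theta_int (j - k) t) = (\<Sum>j\<in>{0..N}. c (j + k) * \<kappa> (j + k) * theta_int j t)"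
    if "k \<ge> 0" for k :: int and \<kappa> :: "int \<Rightarrow> real"
  proof -
    have "(\<Sum>j\<in>{0..N}. c j * \<kappa> j * theta_int (j - k) t)
        = (\<Sum>j\<in>{0..N}. (\<lambda>i. c (i + k) * \<kappa> (i + k) * theta_int i t) (j - k))"
      by simp
    also have "\<dots> = (\<Sum>j\<in>{0..N}. c (j + k) * \<kappa> (j + k) * theta_int j t)"
    proof (rule sum_atLeastAtMost_shift)
      fix i
      assume "c (i + k) * \<kappa> (i + k) * theta_int i t \<noteq> 0"
      then have "c (i + k) \<noteq> 0" "0 \<le> i"
        by (auto simp: theta_int_def split: if_splits)
      then show "0 \<le> i \<and> i \<le> N \<and> 0 \<le> i + k \<and> i + k \<le> N"
        using c that unfolding supported_upto_def by force
    qed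
    finally show ?thesis .
  qed
  have "Lop (\<lambda>s. \<Sum>j\<in>{0..N}. c j * theta_int j s) t
      = (\<Sum>j\<in>{0..N}. c j * \<Lambda> j * theta_int j t) + (\<Sum>j\<in>{0..N}. c j * \<kappa>\<^sub>1 j * theta_int (j - 1) t)
        + (\<Sum>j\<in>{0..N}. c j * \<kappa>\<^sub>2 j * theta_int (j - 2) t)"
    by (simp add: Lop_sum Lop_theta_int[OF t] sum.distrib algebra_simps)
  then show ?thesis
    unfolding shift[of 1, simplified] shift[of 2, simplified]
    by (simp add: L_coeffs_def sum.distrib algebra_simps)
qed

lemma mu_theta_sum:
  assumes c: "supported_upto c N" and "0 \<le> N"
  shows "\<mu> t * (\<Sum>j\<in>{0..N}. c j * theta_int j t) = (\<Sum>j\<in>{0..N+1}. mu_coeffs c j * theta_int j t)"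
proof -
  have "\<mu> t * (\<Sum>j\<in>{0..N}. c j * theta_int j t) = (\<Sum>j\<in>{0..N}. c j * (theta_int (j + 1) t + f j * theta_int j t))"
    unfolding sum_distrib_left by (intro sum.cong) (auto simp: mu_mult_theta_int[symmetric])
  also have "\<dots> = (\<Sum>j\<in>{0..N+1}. c j * (theta_int (j + 1) t + f j * theta_int j t))"
    using c by (rule sum_supported_upto_extend) simp
  also have "\<dots> = (\<Sum>j\<in>{0..N+1}. c j * theta_int (j + 1) t) + (\<Sum>j\<in>{0..N+1}. c j * f j * theta_int j t)"
    by (simp add: sum.distrib algebra_simps)
  also have "(\<Sum>j\<in>{0..N+1}. c j * theta_int (j + 1) t) = (\<Sum>j\<in>{0..N+1}. c (j - 1) * theta_int j t)"
  proof -
    have "(\<Sum>j\<in>{0..N+1}. c j * theta_int (j + 1) t) = (\<Sum>j\<in>{0..N+1}. (\<lambda>i. c (i - 1) * theta_int i t) (j - (-1)))"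
      by simp
    also have "\<dots> = (\<Sum>j\<in>{0..N+1}. c (j - 1) * theta_int j t)"
    proof (rule sum_atLeastAtMost_shift)
      fix i
      assume "c (i - 1) * theta_int i t \<noteq> 0"
      then have "c (i - 1) \<noteq> 0"
        by auto
      then show "0 \<le> i \<and> i \<le> N + 1 \<and> 0 \<le> i + - 1 \<and> i + - 1 \<le> N + 1"
        using c unfolding supported_upto_def by force
    qed
    finally show ?thesis .
  qed
  finally show ?thesis
    by (simp add: mu_coeffs_def sum.distrib algebra_simps)
qed

definition theta_poly :: "nat \<Rightarrow> real poly" where
  "theta_poly k = (\<Prod>i<k. [:- f (int i), 1:])"

lemma poly_theta_poly: "poly (theta_poly k) (\<mu> t) = \<theta> k t"
  by (induction k) (simp_all add: theta_poly_def theta_Suc algebra_simps)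

lemma theta_poly_monic: "degree (theta_poly k) = k \<and> coeff (theta_poly k) k = 1"
proof (induction k)
  case (Suc k)
  have split: "theta_poly (Suc k) = theta_poly k * [:- f (int k), 1:]"
    by (simp add: theta_poly_def)
  have "theta_poly k \<noteq> 0"
    using Suc by auto
  then have deg: "degree (theta_poly (Suc k)) = Suc k"
    using Suc unfolding split by (subst degree_mult_eq) auto
  then have "coeff (theta_poly (Suc k)) (Suc k) = lead_coeff (theta_poly k) * lead_coeff [:- f (int k), 1:]"
    unfolding split lead_coeff_mult[symmetric] by simp
  with deg Suc show ?case
    by simp
qed (simp add: theta_poly_def)

lemma coeff_theta_poly_above: "k < m \<Longrightarrow> coeff (theta_poly k) m = 0"
  using theta_poly_monic[of k] by (simp add: coeff_eq_0)

text \<open>Distinct points \<open>t\<close> of the lattice give infinitely many values \<open>\<mu> t\<close>.\<close>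
lemma poly_eq_0_if_vanishes_on_mu:
  assumes "\<And>t. 2*t + c2 \<notin> {-1, 0, 1} \<Longrightarrow> poly Q (\<mu> t) = 0"
  shows "Q = 0"
proof (rule ccontr)
  assume "Q \<noteq> 0"
  then have fin: "finite {x. poly Q x = 0}"
    by (rule poly_roots_finite)
  define r where "r = \<bar>c2\<bar> + 2"
  define h where "h n = \<mu> (r + real n)" for n :: nat
  have "inj h"
  proof (rule injI)
    fix n m
    assume "h n = h m"
    then have "(real n - real m) * (2*r + real n + real m + c2) = 0"
      unfolding h_def mu_def by (simp add: algebra_simps power2_eq_square)
    moreover have "2*r + real n + real m + c2 > 0"
      unfolding r_def by (simp add: abs_if)
    ultimately show "n = m"
      by simp
  qed
  moreover have "range h \<subseteq> {x. poly Q x = 0}"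
  proof
    fix x
    assume "x \<in> range h"
    then obtain n where x: "x = h n"
      by auto
    have "2*(r + real n) + c2 \<notin> {-1, 0, 1}"
      unfolding r_def by (auto simp: abs_if)
    then show "x \<in> {x. poly Q x = 0}"
      using assms x h_def by auto
  qed
  ultimately have "finite (UNIV :: nat set)"
    using fin by (metis finite_imageD finite_subset)
  then show False
    by simp
qed

definition theta_comb :: "(int \<Rightarrow> real) \<Rightarrow> int \<Rightarrow> real poly" where
  "theta_comb c N = (\<Sum>j\<in>{0..N}. smult (c j) (theta_poly (nat j)))"

lemma poly_theta_comb: "poly (theta_comb c N) (\<mu> t) = (\<Sum>j\<in>{0..N}. c j * theta_int j t)"
  by (simp add: theta_comb_def poly_sum poly_theta_poly theta_int_def)

lemma theta_comb_lincomb: "theta_comb (\<lambda>j. x j + a * y j) N = theta_comb x N + smult a (theta_comb y N)"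
  by (rule poly_eqI) (simp add: theta_comb_def coeff_sum sum.distrib sum_distrib_left algebra_simps)

lemma theta_comb_extend:
  assumes "supported_upto c N" "N \<le> M"
  shows "theta_comb c N = theta_comb c M"
  unfolding theta_comb_def
  by (rule sum_eq_if_same_support) (use assms in \<open>force simp: supported_upto_def\<close>)+

lemma coeff_theta_comb_top: "coeff (theta_comb c (int n)) n = c (int n)"
proof -
  have "{0..int n} = int ` {..n}"
    by (auto simp: image_iff intro!: bexI[where x="nat _"])
  then have "coeff (theta_comb c (int n)) n = (\<Sum>k\<le>n. c (int k) * coeff (theta_poly k) n)"
    by (simp add: theta_comb_def coeff_sum sum.reindex)
  also have "\<dots> = c (int n) * coeff (theta_poly n) n"
    by (rule sum.remove[of _ n, THEN trans]) (auto simp: coeff_theta_poly_above intro: sum.neutral)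
  finally show ?thesis
    using theta_poly_monic[of n] by simp
qed

lemma theta_comb_eq_0_imp:
  "theta_comb c (int n) = 0 \<Longrightarrow> 0 \<le> j \<Longrightarrow> j \<le> int n \<Longrightarrow> c j = 0"
proof (induction n arbitrary: j)
  case 0
  then show ?case
    using coeff_theta_comb_top[of c 0] by simp
next
  case (Suc n)
  have top: "c (int (Suc n)) = 0"
    using coeff_theta_comb_top[of c "Suc n"] Suc.prems(1) by simp
  have "{0..int (Suc n)} = insert (int (Suc n)) {0..int n}"
    by auto
  then have "theta_comb c (int n) = 0"
    using Suc.prems(1) top by (simp add: theta_comb_def)
  with Suc top show ?case
    by (cases "j = int (Suc n)") auto
qed

lemma Lop_theta_comb:
  assumes "2*t + c2 \<notin> {-1, 0, 1}" "supported_upto c N"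
  shows "Lop (\<lambda>s. poly (theta_comb c N) (\<mu> s)) t = poly (theta_comb (L_coeffs c) N) (\<mu> t)"
  using Lop_theta_sum[OF assms] by (simp add: poly_theta_comb)

lemma mu_mult_theta_comb:
  assumes "supported_upto c N" "0 \<le> N"
  shows "[:0, 1:] * theta_comb c N = theta_comb (mu_coeffs c) (N + 1)"
proof -
  have "[:0, 1:] * theta_comb c N - theta_comb (mu_coeffs c) (N + 1) = 0"
    by (rule poly_eq_0_if_vanishes_on_mu) (simp add: poly_theta_comb mu_theta_sum[OF assms])
  then show ?thesis
    by simp
qed

lemma L_coeffs_eigen_if_L_zero:
  assumes c: "supported_upto c (int n)" and L: "L_zero c2 c3 a0 a1 a2 b0 b1 n (theta_comb c (int n))"
  shows "L_coeffs c i = \<Lambda> (int n) * c i"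
proof -
  have "theta_comb (\<lambda>j. L_coeffs c j + (- \<Lambda> (int n)) * c j) (int n) = 0"
  proof (rule poly_eq_0_if_vanishes_on_mu)
    fix t
    assume "2*t + c2 \<notin> {-1, 0, 1}"
    then show "poly (theta_comb (\<lambda>j. L_coeffs c j + (- \<Lambda> (int n)) * c j) (int n)) (\<mu> t) = 0"
      using L Lop_theta_comb[OF _ c] unfolding L_zero_iff_Lop theta_comb_lincomb by simp
  qed
  then have "0 \<le> i \<Longrightarrow> i \<le> int n \<Longrightarrow> L_coeffs c i = \<Lambda> (int n) * c i"
    by (auto dest: theta_comb_eq_0_imp)
  moreover have "i < 0 \<or> int n < i \<Longrightarrow> L_coeffs c i = \<Lambda> (int n) * c i"
    using c L_coeffs_supported[OF c] unfolding supported_upto_def by auto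
  ultimately show ?thesis
    by linarith
qed

section \<open>The Askey-Wilson relation and the three-term structure\<close>

lemma askey_wilson_relation:
  "L_coeffs (L_coeffs (mu_coeffs c)) i - 2 * L_coeffs (mu_coeffs (L_coeffs c)) i
     + mu_coeffs (L_coeffs (L_coeffs c)) i
     - 2 * a0 * (L_coeffs (mu_coeffs c) i + mu_coeffs (L_coeffs c) i)
     - ((b0 - a0)\<^sup>2 - a0\<^sup>2) * mu_coeffs c i - 2 * L_coeffs (L_coeffs c) i
     - (2 * a1 - b0) * L_coeffs c i - b1 * (b0 - 2 * a0) * c i = 0"
proof -
  txt \<open>A polynomial identity in \<open>i\<close> and the parameters, decided by Groebner bases once the
    shifted indices are merged syntactically (so that the values \<open>c (i + k)\<close> are atoms) and the
    constant \<open>1/16\<close> is replaced by a variable \<open>h\<close> with \<open>16 h = 1\<close>.\<close>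
  define k where "k = c3 - c2\<^sup>2 / 4"
  define h :: real where "h = 1/16"
  have h: "16 * h = 1"
    by (simp add: h_def)
  have f: "f j = k + (2 * of_int j + 1)\<^sup>2 * h" for j
    by (simp add: fseq_def k_def h_def algebra_simps)
  have g: "gseq j = of_int j * (2 * of_int j - 1) * (4 * h)" for j
    by (simp add: gseq_def h_def)
  have idx: "i - 1 + 1 = i" "i - 1 + 2 = i + 1" "i + 1 - 1 = i" "i + 1 + 1 = i + 2" "i + 1 + 2 = i + 3"
    "i + 2 - 1 = i + 1" "i + 2 + 1 = i + 3" "i + 2 + 2 = i + 4" "i + 3 - 1 = i + 2" "i + 4 - 1 = i + 3"
    "i + 1 + 1 - 1 = i + 1" "i + 1 + 2 - 1 = i + 2" "i + 2 + 1 - 1 = i + 2" "i + 2 + 2 - 1 = i + 3"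
    by simp_all
  show ?thesis
    unfolding L_coeffs_def mu_coeffs_def idx
    unfolding lam_def k1_def k2_def f g of_int_add of_int_diff of_int_1 of_int_numeral
    using h by algebra
qed

lemma L_coeffs_lincomb: "L_coeffs (\<lambda>j. x j + a * y j) i = L_coeffs x i + a * L_coeffs y i"
  by (simp add: L_coeffs_def algebra_simps)

text \<open>On an eigenvector \<open>c\<close> of eigenvalue \<open>\<Lambda> n\<close>, the Askey-Wilson relation factors
  through the neighbouring eigenvalues, since \<open>\<Lambda> (n+1) + \<Lambda> (n-1) = 2 \<Lambda> n + 2 a0\<close>.\<close>
lemma L_coeffs_on_mu_eigvec:
  fixes n :: int
  assumes eig: "\<And>i. L_coeffs c i = \<Lambda> n * c i"
  shows "L_coeffs (L_coeffs (mu_coeffs c)) i - (\<Lambda> (n + 1) + \<Lambda> (n - 1)) * L_coeffs (mu_coeffs c) i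
      + \<Lambda> (n + 1) * \<Lambda> (n - 1) * mu_coeffs c i
    = (2 * (\<Lambda> n)\<^sup>2 + (2 * a1 - b0) * \<Lambda> n + b1 * (b0 - 2 * a0)) * c i"
proof -
  have Lc: "L_coeffs c = (\<lambda>i. \<Lambda> n * c i)"
    using eig by auto
  have scale: "L_coeffs (\<lambda>i. a * x i) i = a * L_coeffs x i" "mu_coeffs (\<lambda>i. a * x i) i = a * mu_coeffs x i"
    for a x i
    by (simp_all add: L_coeffs_def mu_coeffs_def algebra_simps)
  show ?thesis
    using askey_wilson_relation[of c i]
    unfolding Lc scale by (simp add: scale lam_def power2_eq_square algebra_simps)
qed

lemma eigvec_vanishes_above:
  assumes eig: "\<And>i. L_coeffs y i = l * y i"
    and top: "\<And>i. M < i \<Longrightarrow> y i = 0"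
    and distinct: "\<And>i. K < i \<Longrightarrow> i \<le> M \<Longrightarrow> \<Lambda> i \<noteq> l"
  shows "K < i \<Longrightarrow> y i = 0"
proof -
  have "y i = 0" if "M - int k < i" "K < i" for k i
    using that
  proof (induction k arbitrary: i)
    case (Suc k)
    show ?case
    proof (cases "M - int k < i")
      case False
      then have "y (i + 1) = 0" "y (i + 2) = 0"
        using Suc by auto
      then have "\<Lambda> i * y i = l * y i"
        using eig[of i] by (simp add: L_coeffs_def)
      with distinct[of i] Suc.prems False show ?thesis
        by auto
    qed (use Suc in auto)
  qed (use top in auto)
  moreover assume "K < i"
  moreover have "M - int (nat (M - K)) < i"
    using \<open>K < i\<close> by (cases "K \<le> M") simp_all
  ultimately show "y i = 0"
    by blast
qed

lemma eigvec_multiple: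
  assumes distinct: "\<And>a b. 0 \<le> a \<Longrightarrow> a < b \<Longrightarrow> \<Lambda> a \<noteq> \<Lambda> b"
    and "0 \<le> m" "m \<le> M"
    and eig_y: "\<And>i. L_coeffs y i = \<Lambda> m * y i" and supp_y: "supported_upto y M"
    and eig_e: "\<And>i. L_coeffs e i = \<Lambda> m * e i" and supp_e: "supported_upto e m" and "e m = 1"
  shows "y i = y m * e i"
proof -
  define z where "z i = y i + (- y m) * e i" for i
  have eig_z: "L_coeffs z i = \<Lambda> m * z i" for i
    unfolding z_def L_coeffs_lincomb eig_y eig_e by (simp add: algebra_simps)
  have supp_z: "supported_upto z M"
    using supp_y supp_e \<open>m \<le> M\<close> unfolding supported_upto_def z_def by auto
  have "z m = 0"
    using \<open>e m = 1\<close> by (simp add: z_def)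
  have above: "z i = 0" if "m < i" for i
  proof (rule eigvec_vanishes_above[OF eig_z _ _ that])
    show "z i = 0" if "M < i" for i
      using supp_z that unfolding supported_upto_def by auto
    show "\<Lambda> i \<noteq> \<Lambda> m" if "m < i" "i \<le> M" for i
      using distinct[of m i] \<open>0 \<le> m\<close> that by auto
  qed
  have "z i = 0" if "-1 < i" for i
  proof (rule eigvec_vanishes_above[OF eig_z _ _ that])
    show "z i = 0" if "m - 1 < i" for i
      using above \<open>z m = 0\<close> that by (cases "i = m") auto
    show "\<Lambda> i \<noteq> \<Lambda> m" if "-1 < i" "i \<le> m - 1" for i
      using distinct[of i m] that by auto
  qed
  then have "z i = 0"
    using supp_z unfolding supported_upto_def by (cases "i < 0") auto
  then show ?thesis
    by (simp add: z_def)
qed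

lemma L_coeffs_quadratic_kernel:
  assumes distinct: "\<And>a b. 0 \<le> a \<Longrightarrow> a < b \<Longrightarrow> \<Lambda> a \<noteq> \<Lambda> b" and "0 \<le> m" "m < m'"
    and eig_e: "\<And>i. L_coeffs e i = \<Lambda> m * e i" and supp_e: "supported_upto e m" and "e m = 1"
    and eig_e': "\<And>i. L_coeffs e' i = \<Lambda> m' * e' i" and supp_e': "supported_upto e' m'" and "e' m' = 1"
    and supp_w: "supported_upto w m'"
    and ann: "\<And>i. L_coeffs (L_coeffs w) i - (\<Lambda> m' + \<Lambda> m) * L_coeffs w i + \<Lambda> m' * \<Lambda> m * w i = 0"
  obtains A B where "\<And>i. w i = A * e' i + B * e i"
proof -
  define y where "y = (\<lambda>i. L_coeffs w i + (- \<Lambda> m) * w i)"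
  have eig_y: "L_coeffs y i = \<Lambda> m' * y i" for i
    using ann[of i] unfolding y_def L_coeffs_lincomb by (simp add: algebra_simps)
  have supp_y: "supported_upto y m'"
    using L_coeffs_supported[OF supp_w] supp_w unfolding supported_upto_def y_def by auto
  have y_eq: "y i = y m' * e' i" for i
    by (rule eigvec_multiple[OF distinct _ _ eig_y supp_y eig_e' supp_e' \<open>e' m' = 1\<close>]) (use assms in auto)
  have ne: "\<Lambda> m' \<noteq> \<Lambda> m"
    using distinct[OF \<open>0 \<le> m\<close> \<open>m < m'\<close>] by (rule not_sym)
  define A where "A = y m' / (\<Lambda> m' - \<Lambda> m)"
  define z where "z = (\<lambda>i. w i + (- A) * e' i)"
  have eig_z: "L_coeffs z i = \<Lambda> m * z i" for i
  proof -
    have "L_coeffs z i - \<Lambda> m * z i = (y m' - A * (\<Lambda> m' - \<Lambda> m)) * e' i"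
      using y_eq[of i] unfolding z_def L_coeffs_lincomb eig_e' y_def by (simp add: algebra_simps)
    also have "\<dots> = 0"
      using ne by (simp add: A_def)
    finally show ?thesis
      by simp
  qed
  have supp_z: "supported_upto z m'"
    using supp_w supp_e' unfolding supported_upto_def z_def by auto
  have z_eq: "z i = z m * e i" for i
    by (rule eigvec_multiple[OF distinct _ _ eig_z supp_z eig_e supp_e \<open>e m = 1\<close>]) (use assms in auto)
  show ?thesis
  proof (rule that)
    show "w i = A * e' i + z m * e i" for i
      using z_eq[of i] by (simp add: z_def)
  qed
qed

text \<open>The constant \<open>\<alpha>\<close> is chosen so that \<open>mu_coeffs c - \<alpha> c\<close> lies in the kernel of
  \<open>(L - \<Lambda> (n+1)) (L - \<Lambda> (n-1))\<close>.\<close>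
lemma mu_coeffs_three_term:
  fixes n :: int
  assumes distinct: "\<And>a b. 0 \<le> a \<Longrightarrow> a < b \<Longrightarrow> \<Lambda> a \<noteq> \<Lambda> b" and "1 \<le> n"
    and eig_m: "\<And>i. L_coeffs cm i = \<Lambda> (n - 1) * cm i"
    and supp_m: "supported_upto cm (n - 1)" and "cm (n - 1) = 1"
    and eig: "\<And>i. L_coeffs c i = \<Lambda> n * c i" and supp: "supported_upto c n" and "c n = 1"
    and eig_p: "\<And>i. L_coeffs cp i = \<Lambda> (n + 1) * cp i"
    and supp_p: "supported_upto cp (n + 1)" and "cp (n + 1) = 1"
  obtains \<alpha> B where "\<And>i. mu_coeffs c i = cp i + \<alpha> * c i + B * cm i"
proof -
  have ne: "\<Lambda> n \<noteq> \<Lambda> (n + 1)" "\<Lambda> n \<noteq> \<Lambda> (n - 1)"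
    using distinct[of n "n + 1"] distinct[of "n - 1" n] \<open>1 \<le> n\<close> by auto
  define \<alpha> where "\<alpha> = (2 * (\<Lambda> n)\<^sup>2 + (2 * a1 - b0) * \<Lambda> n + b1 * (b0 - 2 * a0))
    / ((\<Lambda> n - \<Lambda> (n + 1)) * (\<Lambda> n - \<Lambda> (n - 1)))"
  define w where "w = (\<lambda>i. mu_coeffs c i + (- \<alpha>) * c i)"
  have Lw: "L_coeffs w = (\<lambda>i. L_coeffs (mu_coeffs c) i + (- \<alpha> * \<Lambda> n) * c i)"
    by (intro ext) (simp only: w_def L_coeffs_lincomb eig mult.assoc)
  have ann: "L_coeffs (L_coeffs w) i - (\<Lambda> (n + 1) + \<Lambda> (n - 1)) * L_coeffs w i
      + \<Lambda> (n + 1) * \<Lambda> (n - 1) * w i = 0" for i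
  proof -
    have "L_coeffs (L_coeffs w) i - (\<Lambda> (n + 1) + \<Lambda> (n - 1)) * L_coeffs w i + \<Lambda> (n + 1) * \<Lambda> (n - 1) * w i
        = (L_coeffs (L_coeffs (mu_coeffs c)) i - (\<Lambda> (n + 1) + \<Lambda> (n - 1)) * L_coeffs (mu_coeffs c) i
            + \<Lambda> (n + 1) * \<Lambda> (n - 1) * mu_coeffs c i)
          - \<alpha> * ((\<Lambda> n - \<Lambda> (n + 1)) * (\<Lambda> n - \<Lambda> (n - 1))) * c i"
      unfolding Lw L_coeffs_lincomb eig by (simp add: w_def algebra_simps power2_eq_square)
    also have "\<dots> = 0"
      using L_coeffs_on_mu_eigvec[OF eig, of i] ne unfolding \<alpha>_def by simp
    finally show ?thesis .
  qed
  have supp_w: "supported_upto w (n + 1)"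
    using mu_coeffs_supported[OF supp] supp unfolding supported_upto_def w_def by auto
  obtain A B where w_eq: "\<And>i. w i = A * cp i + B * cm i"
    by (rule L_coeffs_quadratic_kernel[OF distinct _ _ eig_m supp_m \<open>cm (n - 1) = 1\<close> eig_p supp_p
          \<open>cp (n + 1) = 1\<close> supp_w ann]) (use \<open>1 \<le> n\<close> in auto)
  have "A = 1"
    using w_eq[of "n + 1"] supp supp_m \<open>c n = 1\<close> \<open>cp (n + 1) = 1\<close>
    unfolding w_def mu_coeffs_def supported_upto_def by simp
  with w_eq show ?thesis
    by (intro that[of \<alpha> B]) (simp add: w_def algebra_simps)
qed

lemma mu_coeffs_base:
  assumes "supported_upto c 0" "c 0 = 1" "supported_upto cp 1" "cp 1 = 1"
  shows "mu_coeffs c i = cp i + (f 0 - cp 0) * c i"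
proof -
  consider "i < 0 \<or> 1 < i" | "i = 0" | "i = 1"
    by linarith
  then show ?thesis
    by cases (use assms in \<open>auto simp: supported_upto_def mu_coeffs_def\<close>)
qed

lemma three_term_alpha:
  fixes n :: int
  assumes rec: "\<And>i. mu_coeffs c i = cp i + \<alpha> * c i + B * cm i"
    and eig_p: "\<And>i. L_coeffs cp i = \<Lambda> (n + 1) * cp i"
    and supp_p: "supported_upto cp (n + 1)" and "cp (n + 1) = 1"
    and "c n = 1" "cm n = 0" "\<Lambda> n \<noteq> \<Lambda> (n + 1)"
  shows "\<alpha> = c (n - 1) + f n + \<kappa>\<^sub>1 (n + 1) / (\<Lambda> n - \<Lambda> (n + 1))"
proof -
  have "c (n - 1) + f n = cp n + \<alpha>"
    using rec[of n] assms by (simp add: mu_coeffs_def)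
  moreover have "\<Lambda> n * cp n + \<kappa>\<^sub>1 (n + 1) = \<Lambda> (n + 1) * cp n"
    using eig_p[of n] supp_p \<open>cp (n + 1) = 1\<close> by (simp add: L_coeffs_def supported_upto_def add.assoc)
  ultimately show ?thesis
    using \<open>\<Lambda> n \<noteq> \<Lambda> (n + 1)\<close> by (simp add: field_simps)
qed

lemma three_term_gamma:
  fixes n :: int
  assumes rec: "\<And>i. mu_coeffs c i = cp i + \<alpha> * c i + B * cm i"
    and eig_p: "\<And>i. L_coeffs cp i = \<Lambda> (n + 1) * cp i" and "cp (n + 1) = 1"
    and "c n = 1" "cm (n - 1) = 1" "cm n = 0" "\<Lambda> (n - 1) \<noteq> \<Lambda> (n + 1)"
  shows "B = (\<kappa>\<^sub>2 (n + 1) + (f n + c (n - 1) - \<alpha>) * \<kappa>\<^sub>1 n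
             + (c (n - 1) * f (n - 1) + c (n - 2) - \<alpha> * c (n - 1)) * (\<Lambda> (n - 1) - \<Lambda> (n + 1)))
           / (\<Lambda> (n - 1) - \<Lambda> (n + 1))"
proof -
  have cp_n: "cp n = f n + c (n - 1) - \<alpha>"
    using rec[of n] assms by (simp add: mu_coeffs_def)
  have "c (n - 2) + f (n - 1) * c (n - 1) = cp (n - 1) + \<alpha> * c (n - 1) + B"
    using rec[of "n - 1"] assms by (simp add: mu_coeffs_def)
  moreover have "\<Lambda> (n - 1) * cp (n - 1) + \<kappa>\<^sub>1 n * cp n + \<kappa>\<^sub>2 (n + 1) = \<Lambda> (n + 1) * cp (n - 1)"
  proof -
    have idx: "n - 1 + 1 = n" "n - 1 + 2 = n + 1"
      by simp_all
    show ?thesis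
      using eig_p[of "n - 1", unfolded L_coeffs_def idx] \<open>cp (n + 1) = 1\<close> by simp
  qed
  ultimately show ?thesis
    using \<open>\<Lambda> (n - 1) \<noteq> \<Lambda> (n + 1)\<close> unfolding cp_n[symmetric] by (simp add: field_simps)
qed

lemma theta_comb_three_term:
  assumes rec: "\<And>i. mu_coeffs c i = cp i + \<alpha> * c i + B * cm i"
    and "supported_upto c N" "0 \<le> N"
  shows "theta_comb cp (N + 1) = [:- \<alpha>, 1:] * theta_comb c N - smult B (theta_comb cm (N + 1))"
proof -
  have "mu_coeffs c = (\<lambda>i. (cp i + \<alpha> * c i) + B * cm i)"
    using rec by auto
  then have "[:0, 1:] * theta_comb c N
      = theta_comb cp (N + 1) + smult \<alpha> (theta_comb c (N + 1)) + smult B (theta_comb cm (N + 1))"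
    using mu_mult_theta_comb[OF assms(2,3)] by (simp add: theta_comb_lincomb)
  moreover have "theta_comb c (N + 1) = theta_comb c N"
    using theta_comb_extend[OF assms(2), of "N + 1"] by simp
  ultimately show ?thesis
    by (simp add: algebra_simps)
qed

end

section \<open>Monic eigenpolynomials\<close>

locale eigenpolynomials = AW_operator +
  fixes P :: "nat \<Rightarrow> real poly" and p :: "nat \<Rightarrow> nat \<Rightarrow> real"
  assumes P_eigen: "\<And>n. degree (P n) = n \<and> lead_coeff (P n) = 1 \<and> L_zero c2 c3 a0 a1 a2 b0 b1 n (P n)"
    and P_unique: "\<And>n q. degree q = n \<Longrightarrow> lead_coeff q = 1 \<Longrightarrow> L_zero c2 c3 a0 a1 a2 b0 b1 n q \<Longrightarrow> q = P n"
    and P_expansion: "\<And>n t. poly (P n) (\<mu> t) = (\<Sum>k\<le>n. p n k * \<theta> (n - k) t)"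
    and p_beyond: "\<And>n k. n < k \<Longrightarrow> p n k = 0"
begin

text \<open>Equal eigenvalues would make \<open>P i + P j\<close> a second monic eigenpolynomial of degree \<open>j\<close>.\<close>
lemma eigenvalues_distinct:
  assumes "0 \<le> a" "a < b"
  shows "\<Lambda> a \<noteq> \<Lambda> b"
proof
  assume eq: "\<Lambda> a = \<Lambda> b"
  obtain i j where ij: "a = int i" "b = int j" "i < j"
    using assms by (metis less_imp_le nonneg_int_cases of_nat_less_iff order.trans)
  have "L_zero c2 c3 a0 a1 a2 b0 b1 j (P i + P j)"
    unfolding L_zero_iff_Lop
  proof (intro allI impI)
    fix t
    assume "2*t + c2 \<notin> {-1, 0, 1}"
    then show "Lop (\<lambda>s. poly (P i + P j) (\<mu> s)) t = \<Lambda> (int j) * poly (P i + P j) (\<mu> t)"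
      using P_eigen[of i] P_eigen[of j] eq ij unfolding L_zero_iff_Lop by (simp add: Lop_add algebra_simps)
  qed
  moreover have "degree (P i + P j) = j" "lead_coeff (P i + P j) = 1"
  proof -
    have "degree (P i) < degree (P j)" "lead_coeff (P j) = 1"
      using P_eigen[of i] P_eigen[of j] \<open>i < j\<close> by auto
    then show "degree (P i + P j) = j" "lead_coeff (P i + P j) = 1"
      using P_eigen[of j] lead_coeff_add_le[of "P i" "P j"] by (simp_all add: degree_add_eq_right)
  qed
  ultimately have "P i + P j = P j"
    using P_unique by blast
  then show False
    using P_eigen[of i] by simp
qed

definition coeffs :: "nat \<Rightarrow> int \<Rightarrow> real" where
  "coeffs n j = (if 0 \<le> j \<and> j \<le> int n then p n (nat (int n - j)) else 0)"

lemma coeffs_supported: "supported_upto (coeffs n) (int n)"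
  by (simp add: supported_upto_def coeffs_def)

lemma coeffs_from_top: "coeffs n (int n - int k) = p n k"
  using p_beyond[of n k] by (auto simp: coeffs_def)

lemma P_eq_theta_comb: "P n = theta_comb (coeffs n) (int n)"
proof -
  have "poly (theta_comb (coeffs n) (int n)) (\<mu> t) = (\<Sum>k\<le>n. p n (n - k) * \<theta> k t)" for t
  proof -
    have "{0..int n} = int ` {..n}"
      by (auto simp: image_iff intro!: bexI[where x="nat _"])
    then show ?thesis
      by (simp add: poly_theta_comb sum.reindex coeffs_def theta_int_def nat_diff_distrib)
  qed
  also have "(\<Sum>k\<le>n. p n (n - k) * \<theta> k t) = poly (P n) (\<mu> t)" for t
    unfolding P_expansion by (rule sum.reindex_bij_witness[of _ "\<lambda>k. n - k" "\<lambda>k. n - k"]) auto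
  finally have "P n - theta_comb (coeffs n) (int n) = 0"
    by (intro poly_eq_0_if_vanishes_on_mu) simp
  then show ?thesis
    by simp
qed

lemma p_0 [simp]: "p n 0 = 1"
proof -
  have "coeff (P n) n = 1"
    using P_eigen[of n] by auto
  then show ?thesis
    using coeff_theta_comb_top[of "coeffs n" n] coeffs_from_top[of n 0] P_eq_theta_comb[of n] by simp
qed

lemma coeffs_top: "coeffs n (int n) = 1"
  using coeffs_from_top[of n 0] by simp

lemma L_coeffs_coeffs: "L_coeffs (coeffs n) i = \<Lambda> (int n) * coeffs n i"
  using P_eigen[of n] by (intro L_coeffs_eigen_if_L_zero coeffs_supported) (simp flip: P_eq_theta_comb)

definition prev_coeffs :: "nat \<Rightarrow> int \<Rightarrow> real" where
  "prev_coeffs n = (if n = 0 then (\<lambda>_. 0) else coeffs (n - 1))"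

lemma prev_coeffs_vanishes_at: "prev_coeffs n (int n) = 0"
  using coeffs_supported[of "n - 1"] by (simp add: prev_coeffs_def supported_upto_def)

lemma prev_coeffs_eigen:
  assumes "n \<noteq> 0"
  shows "\<And>i. L_coeffs (prev_coeffs n) i = \<Lambda> (int n - 1) * prev_coeffs n i"
    and "supported_upto (prev_coeffs n) (int n - 1)" and "prev_coeffs n (int n - 1) = 1"
  using assms L_coeffs_coeffs[of "n - 1"] coeffs_supported[of "n - 1"] coeffs_top[of "n - 1"]
  by (simp_all add: prev_coeffs_def)

lemma theta_comb_prev_coeffs: "theta_comb (prev_coeffs n) (int n + 1) = (if n = 0 then 0 else P (n - 1))"
proof (cases "n = 0")
  case False
  then show ?thesis
    using theta_comb_extend[OF coeffs_supported, of "n - 1" "int n + 1"] by (simp add: prev_coeffs_def P_eq_theta_comb)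
qed (simp add: prev_coeffs_def theta_comb_def)

lemma next_coeffs_eigen:
  shows "\<And>i. L_coeffs (coeffs (Suc n)) i = \<Lambda> (int n + 1) * coeffs (Suc n) i"
    and "supported_upto (coeffs (Suc n)) (int n + 1)" and "coeffs (Suc n) (int n + 1) = 1"
  using L_coeffs_coeffs[of "Suc n"] coeffs_supported[of "Suc n"] coeffs_top[of "Suc n"]
  by (simp_all add: add.commute)

lemma mu_coeffs_coeffs:
  obtains \<alpha> B where "\<And>i. mu_coeffs (coeffs n) i = coeffs (Suc n) i + \<alpha> * coeffs n i + B * prev_coeffs n i"
proof (cases "n = 0")
  case True
  have "mu_coeffs (coeffs 0) i = coeffs 1 i + (f 0 - coeffs 1 0) * coeffs 0 i" for i
    using mu_coeffs_base[OF coeffs_supported[of 0, simplified] coeffs_top[of 0, simplified]]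
      next_coeffs_eigen[of 0]
    by simp
  with True show ?thesis
    by (intro that[of "f 0 - coeffs 1 0" 0]) simp
next
  case False
  show ?thesis
    by (rule mu_coeffs_three_term[OF eigenvalues_distinct _ prev_coeffs_eigen[OF False] L_coeffs_coeffs
          coeffs_supported coeffs_top next_coeffs_eigen])
      (use False in \<open>auto intro: that\<close>)
qed

definition beta :: "nat \<Rightarrow> real" where
  "beta n = p n 1 + f (int n) + \<kappa>\<^sub>1 (int n + 1) / (\<Lambda> (int n) - \<Lambda> (int n + 1))"

definition gamma :: "nat \<Rightarrow> real" where
  "gamma n = (\<kappa>\<^sub>2 (int n + 1) + (f (int n) + p n 1 - beta n) * \<kappa>\<^sub>1 (int n)
      + (p n 1 * f (int n - 1) + p n 2 - beta n * p n 1) * (\<Lambda> (int n - 1) - \<Lambda> (int n + 1)))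
    / (\<Lambda> (int n - 1) - \<Lambda> (int n + 1))"

theorem three_term_recurrence:
  "P (Suc n) = [:- beta n, 1:] * P n - smult (gamma n) (if n = 0 then 0 else P (n - 1))"
proof -
  obtain \<alpha> B where rec: "\<And>i. mu_coeffs (coeffs n) i = coeffs (Suc n) i + \<alpha> * coeffs n i + B * prev_coeffs n i"
    by (rule mu_coeffs_coeffs[where n = n]) blast
  have c: "coeffs n (int n) = 1" "coeffs n (int n - 1) = p n 1" "coeffs n (int n - 2) = p n 2"
    using coeffs_from_top[of n 1] coeffs_from_top[of n 2] by (simp_all add: coeffs_top)
  have "\<alpha> = beta n"
    using three_term_alpha[OF rec next_coeffs_eigen c(1) prev_coeffs_vanishes_at]
      eigenvalues_distinct[of "int n" "int n + 1"]
    by (simp add: beta_def c)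
  moreover have "B = gamma n" if "n \<noteq> 0"
    using three_term_gamma[OF rec next_coeffs_eigen(1,3) c(1) prev_coeffs_eigen(3)[OF that] prev_coeffs_vanishes_at]
      eigenvalues_distinct[of "int n - 1" "int n + 1"] that
    by (simp add: gamma_def \<open>\<alpha> = beta n\<close> c)
  ultimately show ?thesis
    using theta_comb_three_term[OF rec coeffs_supported] theta_comb_prev_coeffs[of n]
    by (cases "n = 0") (simp_all add: P_eq_theta_comb add.commute)
qed
end

theorem lemma4p4:
  fixes c2 c3 a0 a1 a2 b0 b1 :: real
    and P :: "nat \<Rightarrow> real poly"
    and p :: "nat \<Rightarrow> nat \<Rightarrow> real"
  assumes Pn: "\<forall>n. degree (P n) = n \<and> lead_coeff (P n) = 1 \<and> L_zero c2 c3 a0 a1 a2 b0 b1 n (P n)"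
    and uniq: "\<forall>n q. degree q = n \<and> lead_coeff q = 1 \<and> L_zero c2 c3 a0 a1 a2 b0 b1 n q \<longrightarrow> q = P n"
    and expand: "\<forall>n t. poly (P n) (mu c2 c3 t) = (\<Sum>k\<le>n. p n k * theta c2 (n - k) t)"
    and beyond: "\<forall>n k. n < k \<longrightarrow> p n k = 0"
  shows "\<exists>\<beta> \<gamma> :: nat \<Rightarrow> real.
     (\<forall>n. \<beta> n = p n 1 + fseq c2 c3 (int n)
                 + k1 c2 c3 a0 a1 b0 b1 (int n + 1) / (lam a0 b0 (int n) - lam a0 b0 (int n + 1)))
   \<and> (\<forall>n. \<gamma> n =
          (k2 c2 c3 a0 a1 a2 b0 b1 (int n + 1)
           + (fseq c2 c3 (int n) + p n 1 - \<beta> n) * k1 c2 c3 a0 a1 b0 b1 (int n)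
           + (p n 1 * fseq c2 c3 (int n - 1) + p n 2 - \<beta> n * p n 1)
             * (lam a0 b0 (int n - 1) - lam a0 b0 (int n + 1)))
          / (lam a0 b0 (int n - 1) - lam a0 b0 (int n + 1)))
   \<and> (\<forall>n. P (Suc n) = [:- \<beta> n, 1:] * P n - smult (\<gamma> n) (if n = 0 then 0 else P (n - 1)))"
proof -
  interpret eigenpolynomials c2 c3 a0 a1 a2 b0 b1 P p
    using assms by unfold_locales blast+
  show ?thesis
    using three_term_recurrence
    by (intro exI[of _ beta] exI[of _ gamma]) (simp add: beta_def gamma_def)
qed

end
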